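(* Let $\mathcal{X}$ be a set, let $r:\mathcal{X}\to\mathbb{R}$ be a reward function, and let $p$ be a probability distribution on $\mathcal{X}$ (with $r$ measurable). Under the Bradley–Terry model, the preference probability of $i$ over $j$ is $P(i\succ j)=\frac{\exp(r(i))}{\exp(r(i))+\exp(r(j))}$. Consider the binary classifier whose positive-class probability is $$P(y=1\mid x)=\mathbb{E}_{j\sim p}\big[P(x\succ j)\big]=\mathbb{E}_{j\sim p}\left[\frac{\exp(r(x))}{\exp(r(x))+\exp(r(j))}\right],$$ and let $l(x)=\log\frac{P(y=1\mid x)}{1-P(y=1\mid x)}$ be its logit. Then for all $x_1,x_2\in\mathcal{X}$, $$r(x_1)>r(x_2)\iff l(x_1)>l(x_2).$$
   Context: The classifier is trained on preference data generated by the Bradley–Terry model, with preference pairs treated as binary classification data; this is modeled by identifying the probability that $x$ is classified positive with the expected probability that $x$ is preferred over a competitor $j$ drawn at random from $p$. *)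

theory Defs
  imports "HOL-Probability.Probability"
begin

definition bt_pref :: "('a \<Rightarrow> real) \<Rightarrow> 'a \<Rightarrow> 'a \<Rightarrow> real" where
  "bt_pref r i j = exp (r i) / (exp (r i) + exp (r j))"

definition pos_prob :: "'a measure \<Rightarrow> ('a \<Rightarrow> real) \<Rightarrow> 'a \<Rightarrow> real" where
  "pos_prob p r x = (\<integral>j. bt_pref r x j \<partial>p)"

definition logit_cls :: "'a measure \<Rightarrow> ('a \<Rightarrow> real) \<Rightarrow> 'a \<Rightarrow> real" where
  "logit_cls p r x = ln (pos_prob p r x / (1 - pos_prob p r x))"

end

(* The positive-class probability depends on x only through r x: it is the expected
   Bradley-Terry win probability F (r x) of an item with reward r x against a random
   competitor, and F is strictly increasing because each integrand is.  Since
   0 < F < 1 and the logit is strictly increasing on (0, 1), the logit l x = logit (F (r x))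
   orders the items exactly as r does. *)
theory Submission
  imports Defs
begin

definition logit :: "real \<Rightarrow> real" where
  "logit u = ln (u / (1 - u))"

lemma strict_mono_on_logit: "strict_mono_on {0<..<1} logit"
proof (rule strict_mono_onI)
  fix u v :: real
  assume "u \<in> {0<..<1}" "v \<in> {0<..<1}" "u < v"
  then have "0 < u / (1 - u)" "u / (1 - u) < v / (1 - v)"
    by (auto simp: divide_simps algebra_simps)
  then show "logit u < logit v"
    unfolding logit_def by simp
qed

lemma (in prob_space) integral_strict_mono:
  fixes f g :: "'a \<Rightarrow> real"
  assumes "integrable M f" "integrable M g" "\<And>x. x \<in> space M \<Longrightarrow> f x < g x"
  shows "integral\<^sup>L M f < integral\<^sup>L M g"
  using assms by (intro integral_less_AE_space) (auto simp: emeasure_space_1)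

definition bt_win_prob :: "'a measure \<Rightarrow> ('a \<Rightarrow> real) \<Rightarrow> real \<Rightarrow> real" where
  "bt_win_prob p r t = (\<integral>j. exp t / (exp t + exp (r j)) \<partial>p)"

lemma pos_prob_eq_bt_win_prob: "pos_prob p r x = bt_win_prob p r (r x)"
  by (simp add: pos_prob_def bt_win_prob_def bt_pref_def)

lemma logit_cls_eq: "logit_cls p r x = logit (bt_win_prob p r (r x))"
  by (simp add: logit_cls_def logit_def pos_prob_eq_bt_win_prob)

lemma exp_divide_exp_add_bounds:
  fixes e t :: real
  assumes "0 < e"
  shows "0 < exp t / (exp t + e)" "exp t / (exp t + e) < 1"
  using assms by (simp_all add: add_pos_pos)

lemma exp_divide_exp_add_strict_mono:
  fixes e s t :: real
  assumes "0 < e" "s < t"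
  shows "exp s / (exp s + e) < exp t / (exp t + e)"
proof -
  have "exp s * e < exp t * e"
    using assms by simp
  then show ?thesis
    using assms by (simp add: add_pos_pos divide_simps algebra_simps)
qed

context
  fixes p :: "'a measure" and r :: "'a \<Rightarrow> real"
  assumes prob: "prob_space p" and meas: "r \<in> borel_measurable p"
begin

interpretation prob_space p by (fact prob)

lemma integrable_bt_win_integrand: "integrable p (\<lambda>j. exp t / (exp t + exp (r j)))"
proof (rule integrable_const_bound[where B = 1])
  show "AE j in p. norm (exp t / (exp t + exp (r j))) \<le> 1"
    using exp_divide_exp_add_bounds[of "exp (r _)" t] by (auto intro: less_imp_le)
  show "(\<lambda>j. exp t / (exp t + exp (r j))) \<in> borel_measurable p"
    using meas by measurable
qed

lemma bt_win_prob_bounds: "bt_win_prob p r t \<in> {0<..<1}"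
proof -
  have "integral\<^sup>L p (\<lambda>_. 0) < bt_win_prob p r t"
    unfolding bt_win_prob_def
    by (rule integral_strict_mono) (auto simp: integrable_bt_win_integrand exp_divide_exp_add_bounds)
  moreover have "bt_win_prob p r t < integral\<^sup>L p (\<lambda>_. 1)"
    unfolding bt_win_prob_def
    by (rule integral_strict_mono) (auto simp: integrable_bt_win_integrand exp_divide_exp_add_bounds)
  ultimately show ?thesis
    by (simp add: prob_space)
qed

lemma strict_mono_bt_win_prob: "strict_mono (bt_win_prob p r)"
proof (rule strict_monoI)
  fix s t :: real
  assume "s < t"
  then show "bt_win_prob p r s < bt_win_prob p r t"
    unfolding bt_win_prob_def
    by (intro integral_strict_mono integrable_bt_win_integrand exp_divide_exp_add_strict_mono) auto
qed

end

theorem theorem3p1: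
  fixes p :: "'a measure" and r :: "'a \<Rightarrow> real" and x1 x2 :: 'a
  assumes "prob_space p"
    and "r \<in> borel_measurable p"
    and "x1 \<in> space p" and "x2 \<in> space p"
  shows "r x1 > r x2 \<longleftrightarrow> logit_cls p r x1 > logit_cls p r x2"
proof -
  \<comment> \<open>x1 and x2 need not lie in the support of p: only r x1 and r x2 matter.\<close>
  let ?F = "bt_win_prob p r"
  have "r x1 > r x2 \<longleftrightarrow> ?F (r x1) > ?F (r x2)"
    using strict_mono_bt_win_prob[OF assms(1,2)] by (simp add: strict_mono_less)
  also have "\<dots> \<longleftrightarrow> logit (?F (r x1)) > logit (?F (r x2))"
    using strict_mono_on_less[OF strict_mono_on_logit] bt_win_prob_bounds[OF assms(1,2)]
    by simp
  finally show ?thesis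
    by (simp add: logit_cls_eq)
qed

end
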